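(* Let $\phi,\alpha,\beta$ be arbitrary formulas (not necessarily sentences). Then $$\{\phi\vee(\alpha\to\beta^n): n\in\mathbb N\}\vDash\phi\vee(\alpha\to(\alpha\&\beta)).$$
   Context: Formulas are built from a countable predicate language (variables, constants, predicate symbols) with connectives $\to,\&$, constant $0$ and quantifiers $\forall,\exists$; abbreviations: $\phi\wedge\psi$ is $\phi\&(\phi\to\psi)$, $\phi\vee\psi$ is $((\phi\to\psi)\to\psi)\wedge((\psi\to\phi)\to\phi)$, $1$ is $0\to0$, $\beta^n$ is the $n$-fold $\&$-power of $\beta$. A continuous t-norm is a continuous binary operation $\cdot$ on $[0,1]$ that is commutative, associative, monotone in each argument and has $1$ as unit; it is regarded as the algebra $([0,1],\cdot,\to,\min,\max,0,1)$ where $\to$ is its residuum ($x\cdot y\le z$ iff $x\le y\to z$). For such a $\mathbf B$, a $\mathbf B$-structure $\mathbf M$ consists of a nonempty set $M$, an element $c^{\mathbf M}\in M$ for each constant $c$, and a function $P^{\mathbf M}:M^n\to[0,1]$ for each $n$-ary predicate $P$. For a valuation $v$ (a map from variables to $M$), $\|\phi\|^{\mathbf M,v}$ is defined inductively: $\|P(t_1,\dots,t_n)\|^{\mathbf M,v}=P^{\mathbf M}(t_1^{\mathbf M,v},\dots,t_n^{\mathbf M,v})$ (with $c^{\mathbf M,v}=c^{\mathbf M}$, $x^{\mathbf M,v}=v(x)$), $\|0\|=0$, $\&$ and $\to$ are interpreted by $\cdot$ and its residuum, $\|\forall x\psi\|^{\mathbf M,v}=\inf\{\|\psi\|^{\mathbf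 M,w}:w\equiv_x v\}$ and $\|\exists x\psi\|^{\mathbf M,v}=\sup\{\|\psi\|^{\mathbf M,w}:w\equiv_x v\}$, where $w\equiv_x v$ means $w$ agrees with $v$ except possibly at $x$. $\mathbf M$ is a model of $\phi$ if $\|\phi\|^{\mathbf M,v}=1$ for every valuation $v$, and a model of a set $\Gamma$ if it is a model of each member. $\Gamma\vDash\phi$ means: for every continuous t-norm $\mathbf B$ and every $\mathbf B$-structure $\mathbf M$, if $\mathbf M$ is a model of $\Gamma$ then $\mathbf M$ is a model of $\phi$. *)

theory Defs
  imports Complex_Main
begin

text \<open>A predicate name applied to a list of terms; its arity is the length of the list
  (so predicate symbols are the pairs (name, arity)).\<close>

datatype fterm = Var nat | Const nat

datatype form =
    Atom nat "fterm list"
  | Imp form form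
  | SConj form form
  | Bot
  | All nat form
  | Ex nat form

definition Wedge :: "form \<Rightarrow> form \<Rightarrow> form" where
  "Wedge \<phi> \<psi> = SConj \<phi> (Imp \<phi> \<psi>)"

definition Vee :: "form \<Rightarrow> form \<Rightarrow> form" where
  "Vee \<phi> \<psi> = Wedge (Imp (Imp \<phi> \<psi>) \<psi>) (Imp (Imp \<psi> \<phi>) \<phi>)"

definition Top :: form where
  "Top = Imp Bot Bot"

fun fpow :: "form \<Rightarrow> nat \<Rightarrow> form" where
  "fpow \<beta> 0 = Top"
| "fpow \<beta> (Suc 0) = \<beta>"
| "fpow \<beta> (Suc (Suc n)) = SConj \<beta> (fpow \<beta> (Suc n))"

definition cont_tnorm :: "(real \<Rightarrow> real \<Rightarrow> real) \<Rightarrow> bool" where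
  "cont_tnorm T \<longleftrightarrow>
     (\<forall>x\<in>{0..1}. \<forall>y\<in>{0..1}. T x y \<in> {0..1}) \<and>
     continuous_on ({0..1} \<times> {0..1}) (\<lambda>(x,y). T x y) \<and>
     (\<forall>x\<in>{0..1}. \<forall>y\<in>{0..1}. T x y = T y x) \<and>
     (\<forall>x\<in>{0..1}. \<forall>y\<in>{0..1}. \<forall>z\<in>{0..1}. T (T x y) z = T x (T y z)) \<and>
     (\<forall>x\<in>{0..1}. \<forall>x'\<in>{0..1}. \<forall>y\<in>{0..1}. x \<le> x' \<longrightarrow> T x y \<le> T x' y) \<and>
     (\<forall>x\<in>{0..1}. T x 1 = x)"

definition residuum :: "(real \<Rightarrow> real \<Rightarrow> real) \<Rightarrow> real \<Rightarrow> real \<Rightarrow> real" where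
  "residuum T x y = Sup {z \<in> {0..1}. T z x \<le> y}"

record 'm fstruct =
  mdom :: "'m set"
  cint :: "nat \<Rightarrow> 'm"
  pint :: "nat \<Rightarrow> 'm list \<Rightarrow> real"

definition is_structure :: "'m fstruct \<Rightarrow> bool" where
  "is_structure M \<longleftrightarrow> mdom M \<noteq> {} \<and> (\<forall>c. cint M c \<in> mdom M) \<and>
     (\<forall>p xs. set xs \<subseteq> mdom M \<longrightarrow> pint M p xs \<in> {0..1})"

fun teval :: "'m fstruct \<Rightarrow> (nat \<Rightarrow> 'm) \<Rightarrow> fterm \<Rightarrow> 'm" where
  "teval M v (Var x) = v x"
| "teval M v (Const c) = cint M c"

fun eval :: "(real \<Rightarrow> real \<Rightarrow> real) \<Rightarrow> 'm fstruct \<Rightarrow> (nat \<Rightarrow> 'm) \<Rightarrow> form \<Rightarrow> real" where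
  "eval T M v (Atom p ts) = pint M p (map (teval M v) ts)"
| "eval T M v (Imp \<phi> \<psi>) = residuum T (eval T M v \<phi>) (eval T M v \<psi>)"
| "eval T M v (SConj \<phi> \<psi>) = T (eval T M v \<phi>) (eval T M v \<psi>)"
| "eval T M v Bot = 0"
| "eval T M v (All x \<phi>) = Inf {eval T M (v(x := a)) \<phi> | a. a \<in> mdom M}"
| "eval T M v (Ex x \<phi>) = Sup {eval T M (v(x := a)) \<phi> | a. a \<in> mdom M}"

definition is_model :: "(real \<Rightarrow> real \<Rightarrow> real) \<Rightarrow> 'm fstruct \<Rightarrow> form \<Rightarrow> bool" where
  "is_model T M \<phi> \<longleftrightarrow> (\<forall>v. range v \<subseteq> mdom M \<longrightarrow> eval T M v \<phi> = 1)"

text \<open>Semantic consequence, relative to structures whose domain lives in the type 'm;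
  with 'm left free (universally quantified at theorem level) this is the paper's notion.\<close>
definition entails :: "'m itself \<Rightarrow> form set \<Rightarrow> form \<Rightarrow> bool" where
  "entails (_ :: 'm itself) \<Gamma> \<phi> \<longleftrightarrow>
     (\<forall>T (M :: 'm fstruct). cont_tnorm T \<and> is_structure M \<and> (\<forall>\<gamma>\<in>\<Gamma>. is_model T M \<gamma>)
        \<longrightarrow> is_model T M \<phi>)"

end

theory Submission
  imports Defs "HOL-Analysis.Analysis"
begin

text \<open>In every model of the hypotheses, at each valuation either \<open>\<phi>\<close> holds or
  \<open>a \<le> b\<^sup>n\<close> for all \<open>n\<close>, where \<open>a, b\<close> are the values of \<open>\<alpha>, \<beta>\<close>.
  The powers \<open>b\<^sup>n\<close> decrease to a limit \<open>c \<ge> a\<close>, which is idempotent because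
  \<open>c \<cdot> c = lim b\<^sup>2\<^sup>n = c\<close> by continuity. By the intermediate value theorem
  \<open>a = c \<cdot> d\<close> for some \<open>d\<close>, hence \<open>a \<cdot> c = c \<cdot> c \<cdot> d = a\<close> and so
  \<open>a = a \<cdot> c \<le> a \<cdot> b\<close>, i.e. \<open>\<alpha> \<rightarrow> \<alpha> & \<beta>\<close> holds.\<close>

primrec tpow :: "(real \<Rightarrow> real \<Rightarrow> real) \<Rightarrow> real \<Rightarrow> nat \<Rightarrow> real" where
  "tpow T b 0 = 1"
| "tpow T b (Suc n) = T b (tpow T b n)"

context
  fixes T :: "real \<Rightarrow> real \<Rightarrow> real"
  assumes T: "cont_tnorm T"
begin

lemma tnorm_in_unit: "x \<in> {0..1} \<Longrightarrow> y \<in> {0..1} \<Longrightarrow> T x y \<in> {0..1}"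
  using T unfolding cont_tnorm_def by blast

lemma tnorm_commute: "x \<in> {0..1} \<Longrightarrow> y \<in> {0..1} \<Longrightarrow> T x y = T y x"
  using T unfolding cont_tnorm_def by blast

lemma tnorm_assoc:
  "x \<in> {0..1} \<Longrightarrow> y \<in> {0..1} \<Longrightarrow> z \<in> {0..1} \<Longrightarrow> T (T x y) z = T x (T y z)"
  using T unfolding cont_tnorm_def by blast

lemma tnorm_mono_left:
  "x \<in> {0..1} \<Longrightarrow> x' \<in> {0..1} \<Longrightarrow> y \<in> {0..1} \<Longrightarrow> x \<le> x' \<Longrightarrow> T x y \<le> T x' y"
  using T unfolding cont_tnorm_def by blast

lemma tnorm_mono_right:
  "x \<in> {0..1} \<Longrightarrow> y \<in> {0..1} \<Longrightarrow> y' \<in> {0..1} \<Longrightarrow> y \<le> y' \<Longrightarrow> T x y \<le> T x y'"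
  using tnorm_commute tnorm_mono_left by metis

lemma tnorm_one_right: "x \<in> {0..1} \<Longrightarrow> T x 1 = x"
  using T unfolding cont_tnorm_def by blast

lemma tnorm_one_left: "x \<in> {0..1} \<Longrightarrow> T 1 x = x"
  using tnorm_commute tnorm_one_right by fastforce

lemma tnorm_le_left: "x \<in> {0..1} \<Longrightarrow> y \<in> {0..1} \<Longrightarrow> T x y \<le> x"
  using tnorm_mono_right[of x y 1] tnorm_one_right[of x] by auto

lemma tnorm_le_right: "x \<in> {0..1} \<Longrightarrow> y \<in> {0..1} \<Longrightarrow> T x y \<le> y"
  using tnorm_le_left tnorm_commute by metis

lemma tnorm_zero_right: "x \<in> {0..1} \<Longrightarrow> T x 0 = 0"
  using tnorm_le_right[of x 0] tnorm_in_unit[of x 0] by auto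

lemma tnorm_eq_one_iff:
  assumes x: "x \<in> {0..1}" and y: "y \<in> {0..1}"
  shows "T x y = 1 \<longleftrightarrow> x = 1 \<and> y = 1"
  using tnorm_le_left[OF x y] tnorm_le_right[OF x y] tnorm_one_right[of 1] x y by auto

lemma continuous_on_tnorm_left: "x \<in> {0..1} \<Longrightarrow> continuous_on {0..1} (\<lambda>z. T z x)"
proof -
  assume x: "x \<in> {0..1}"
  have "continuous_on ({0..1} \<times> {0..1}) (\<lambda>(x, y). T x y)"
    using T unfolding cont_tnorm_def by blast
  moreover have "continuous_on {0..1::real} (\<lambda>z. (z, x))"
    by (intro continuous_intros)
  moreover have "(\<lambda>z. (z, x)) ` {0..1} \<subseteq> {0..1} \<times> {0..1}"
    using x by auto
  ultimately have "continuous_on {0..1} ((\<lambda>(x, y). T x y) \<circ> (\<lambda>z. (z, x)))"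
    using continuous_on_compose continuous_on_subset by blast
  then show ?thesis
    by (simp add: o_def)
qed

lemma continuous_on_tnorm_right: "x \<in> {0..1} \<Longrightarrow> continuous_on {0..1} (\<lambda>z. T x z)"
  using continuous_on_tnorm_left continuous_on_cong tnorm_commute by (metis (no_types, lifting))

lemma
  assumes x: "x \<in> {0..1}" and y: "y \<in> {0..1}"
  shows residuum_in_unit: "residuum T x y \<in> {0..1}"
    and tnorm_le_iff_le_residuum: "z \<in> {0..1} \<Longrightarrow> T z x \<le> y \<longleftrightarrow> z \<le> residuum T x y"
proof -
  define S where "S = {z \<in> {0..1}. T z x \<le> y}"
  have "0 \<in> S"
    unfolding S_def using tnorm_zero_right[OF x] tnorm_commute[OF x] y by auto
  moreover have bdd: "bdd_above S"
    unfolding S_def by (rule bdd_aboveI[of _ 1]) auto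
  moreover have "closed S"
  proof -
    have "S = {0..1} \<inter> (\<lambda>z. T z x) -` {..y}"
      unfolding S_def by auto
    then show ?thesis
      using continuous_closed_preimage[OF continuous_on_tnorm_left[OF x]] by auto
  qed
  ultimately have Sup_S: "Sup S \<in> S"
    using closed_contains_Sup by blast
  have residuum_eq: "residuum T x y = Sup S"
    unfolding residuum_def S_def by simp
  show "residuum T x y \<in> {0..1}"
    using Sup_S residuum_eq unfolding S_def by auto
  show "T z x \<le> y \<longleftrightarrow> z \<le> residuum T x y" if z: "z \<in> {0..1}"
  proof
    assume "T z x \<le> y"
    then show "z \<le> residuum T x y"
      using z cSup_upper[OF _ bdd] residuum_eq unfolding S_def by auto
  next
    assume "z \<le> residuum T x y"
    then have "T z x \<le> T (Sup S) x"
      using tnorm_mono_left[OF z _ x] residuum_eq Sup_S unfolding S_def by auto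
    also have "\<dots> \<le> y"
      using Sup_S unfolding S_def by auto
    finally show "T z x \<le> y" .
  qed
qed

lemma residuum_eq_one_iff:
  assumes x: "x \<in> {0..1}" and y: "y \<in> {0..1}"
  shows "residuum T x y = 1 \<longleftrightarrow> x \<le> y"
  using tnorm_le_iff_le_residuum[OF x y, of 1] residuum_in_unit[OF x y] tnorm_one_left[OF x]
  by auto

lemma residuum_one_left:
  assumes y: "y \<in> {0..1}"
  shows "residuum T 1 y = y"
proof -
  have one: "(1::real) \<in> {0..1}"
    by simp
  have r: "residuum T 1 y \<in> {0..1}"
    using residuum_in_unit[OF one y] .
  have "residuum T 1 y \<le> y"
    using tnorm_le_iff_le_residuum[OF one y r] tnorm_one_right[OF r] by simp
  moreover have "y \<le> residuum T 1 y"
    using tnorm_le_iff_le_residuum[OF one y y] tnorm_one_right[OF y] by simp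
  ultimately show ?thesis
    by simp
qed

lemma tnorm_residuum_eq_one_iff:
  assumes x: "x \<in> {0..1}" and y: "y \<in> {0..1}"
  shows "T x (residuum T x y) = 1 \<longleftrightarrow> x = 1 \<and> y = 1"
  using tnorm_eq_one_iff[OF x residuum_in_unit[OF x y]] residuum_eq_one_iff[OF x y] y
  by auto

lemma residuum_disj_eq_one_iff:
  assumes f: "f \<in> {0..1}" and g: "g \<in> {0..1}"
  shows "residuum T (residuum T f g) g = 1 \<and> residuum T (residuum T g f) f = 1
    \<longleftrightarrow> f = 1 \<or> g = 1"
proof -
  have "residuum T (residuum T f g) g = 1 \<and> residuum T (residuum T g f) f = 1
      \<longleftrightarrow> residuum T f g \<le> g \<and> residuum T g f \<le> f"
    using residuum_eq_one_iff residuum_in_unit f g by simp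
  also have "\<dots> \<longleftrightarrow> f = 1 \<or> g = 1"
  proof
    assume le: "residuum T f g \<le> g \<and> residuum T g f \<le> f"
    show "f = 1 \<or> g = 1"
    proof (cases "f \<le> g")
      case True
      then show ?thesis using le residuum_eq_one_iff[OF f g] g by auto
    next
      case False
      then show ?thesis using le residuum_eq_one_iff[OF g f] f by auto
    qed
  next
    assume "f = 1 \<or> g = 1"
    then show "residuum T f g \<le> g \<and> residuum T g f \<le> f"
    proof
      assume "f = 1"
      then show ?thesis
        using residuum_one_left[OF g] residuum_eq_one_iff[OF g f] g by simp
    next
      assume "g = 1"
      then show ?thesis
        using residuum_one_left[OF f] residuum_eq_one_iff[OF f g] f by simp
    qed
  qed
  finally show ?thesis .
qed

lemma tpow_in_unit: "b \<in> {0..1} \<Longrightarrow> tpow T b n \<in> {0..1}"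
proof (induction n)
  case (Suc n)
  then show ?case using tnorm_in_unit[of b "tpow T b n"] by simp
qed simp

lemma tpow_add:
  assumes b: "b \<in> {0..1}"
  shows "tpow T b (m + n) = T (tpow T b m) (tpow T b n)"
proof (induction m)
  case 0
  then show ?case using tnorm_one_left[OF tpow_in_unit[OF b]] by simp
next
  case (Suc m)
  then show ?case using tnorm_assoc[OF b tpow_in_unit[OF b] tpow_in_unit[OF b]] by simp
qed

lemma decseq_tpow: "b \<in> {0..1} \<Longrightarrow> decseq (tpow T b)"
  unfolding decseq_Suc_iff using tnorm_le_right tpow_in_unit by simp

lemma tpow_limit_idempotent:
  assumes b: "b \<in> {0..1}" and lim: "tpow T b \<longlonglongrightarrow> c" and c: "c \<in> {0..1}"
  shows "T c c = c"
proof -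
  have "continuous_on ({0..1} \<times> {0..1}) (\<lambda>(x, y). T x y)"
    using T unfolding cont_tnorm_def by blast
  moreover have "(\<lambda>n. (tpow T b n, tpow T b n)) \<longlonglongrightarrow> (c, c)"
    using lim by (intro tendsto_Pair)
  ultimately have "(\<lambda>n. T (tpow T b n) (tpow T b n)) \<longlonglongrightarrow> T c c"
    using continuous_on_tendsto_compose[of _ "\<lambda>(x, y). T x y"] c tpow_in_unit[OF b]
    by fastforce
  moreover have "T (tpow T b n) (tpow T b n) = tpow T b (2 * n)" for n
    using tpow_add[OF b, of n n] by (simp add: mult_2)
  ultimately have "(\<lambda>n. tpow T b (2 * n)) \<longlonglongrightarrow> T c c"
    by simp
  moreover have "(\<lambda>n. tpow T b (2 * n)) \<longlonglongrightarrow> c"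
    using LIMSEQ_subseq_LIMSEQ[OF lim, of "\<lambda>n. 2 * n"] by (simp add: strict_mono_def o_def)
  ultimately show ?thesis
    using LIMSEQ_unique by blast
qed

lemma idempotent_absorbs_below:
  assumes a: "a \<in> {0..1}" and c: "c \<in> {0..1}" and idem: "T c c = c" and "a \<le> c"
  shows "T a c = a"
proof -
  have "\<exists>d. 0 \<le> d \<and> d \<le> 1 \<and> T c d = a"
    using IVT'[of "T c" 0 a 1] continuous_on_tnorm_right[OF c] tnorm_zero_right[OF c]
      tnorm_one_right[OF c] a \<open>a \<le> c\<close> by simp
  then obtain d where d: "d \<in> {0..1}" and a_eq: "a = T c d"
    by auto
  have "T a c = T c (T c d)"
    using a_eq tnorm_commute[OF tnorm_in_unit[OF c d] c] by simp
  also have "\<dots> = T (T c c) d"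
    by (rule tnorm_assoc[OF c c d, symmetric])
  also have "\<dots> = a"
    using idem a_eq by simp
  finally show ?thesis .
qed

lemma le_tnorm_if_le_tpow:
  assumes a: "a \<in> {0..1}" and b: "b \<in> {0..1}" and le: "\<And>n. a \<le> tpow T b n"
  shows "a \<le> T a b"
proof -
  have nonneg: "\<forall>n. 0 \<le> tpow T b n"
    using tpow_in_unit[OF b] by simp
  obtain c where lim: "tpow T b \<longlonglongrightarrow> c" and c_le: "\<forall>n. c \<le> tpow T b n"
    by (rule decseq_convergent[OF decseq_tpow[OF b] nonneg])
  have "a \<le> c"
    using LIMSEQ_le_const[OF lim, of a] le by blast
  moreover have "c \<le> b"
    using c_le tnorm_one_right[OF b] by (metis One_nat_def tpow.simps)
  moreover have c: "c \<in> {0..1}"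
    using LIMSEQ_le_const[OF lim, of 0] nonneg \<open>c \<le> b\<close> b by auto
  ultimately have "a = T a c"
    using idempotent_absorbs_below[OF a c tpow_limit_idempotent[OF b lim c]] by simp
  also have "\<dots> \<le> T a b"
    using tnorm_mono_right[OF a c b \<open>c \<le> b\<close>] .
  finally show ?thesis .
qed

context
  fixes M :: "'m fstruct"
  assumes M: "is_structure M"
begin

lemma eval_in_unit: "range v \<subseteq> mdom M \<Longrightarrow> eval T M v \<phi> \<in> {0..1}"
proof (induction \<phi> arbitrary: v)
  case (Atom p ts)
  have "teval M v t \<in> mdom M" for t
    using Atom M unfolding is_structure_def by (cases t) auto
  then have "set (map (teval M v) ts) \<subseteq> mdom M"
    by auto
  then show ?case
    using M unfolding is_structure_def by simp
next
  case (Imp \<phi> \<psi>)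
  then show ?case
    using residuum_in_unit[OF Imp.IH(1)[OF Imp.prems] Imp.IH(2)[OF Imp.prems]] by simp
next
  case (SConj \<phi> \<psi>)
  then show ?case
    using tnorm_in_unit[OF SConj.IH(1)[OF SConj.prems] SConj.IH(2)[OF SConj.prems]] by simp
next
  case Bot
  then show ?case by simp
next
  case (All x \<phi>)
  let ?S = "{eval T M (v(x := a)) \<phi> | a. a \<in> mdom M}"
  have "range (v(x := a)) \<subseteq> mdom M" if "a \<in> mdom M" for a
    using All.prems that by auto
  then have "?S \<subseteq> {0..1}"
    using All.IH by blast
  moreover have "?S \<noteq> {}"
    using M unfolding is_structure_def by auto
  ultimately have "Inf ?S \<in> {0..1}"
    by (meson atLeastAtMost_iff bdd_below_Icc bdd_below_mono cInf_greatest cInf_lower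
        dual_order.trans ex_in_conv subset_eq)
  then show ?case by simp
next
  case (Ex x \<phi>)
  let ?S = "{eval T M (v(x := a)) \<phi> | a. a \<in> mdom M}"
  have "range (v(x := a)) \<subseteq> mdom M" if "a \<in> mdom M" for a
    using Ex.prems that by auto
  then have "?S \<subseteq> {0..1}"
    using Ex.IH by blast
  moreover have "?S \<noteq> {}"
    using M unfolding is_structure_def by auto
  ultimately have "Sup ?S \<in> {0..1}"
    by (meson atLeastAtMost_iff bdd_above_Icc bdd_above_mono cSup_least cSup_upper
        order.trans ex_in_conv subset_eq)
  then show ?case by simp
qed

lemma eval_Imp_eq_one_iff:
  assumes v: "range v \<subseteq> mdom M"
  shows "eval T M v (Imp \<phi> \<psi>) = 1 \<longleftrightarrow> eval T M v \<phi> \<le> eval T M v \<psi>"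
  using residuum_eq_one_iff[OF eval_in_unit[OF v] eval_in_unit[OF v]] by simp

lemma eval_Vee_eq_one_iff:
  assumes v: "range v \<subseteq> mdom M"
  shows "eval T M v (Vee \<phi> \<psi>) = 1 \<longleftrightarrow> eval T M v \<phi> = 1 \<or> eval T M v \<psi> = 1"
proof -
  let ?f = "eval T M v \<phi>" and ?g = "eval T M v \<psi>"
  have f: "?f \<in> {0..1}" and g: "?g \<in> {0..1}"
    using eval_in_unit[OF v] by auto
  have A: "residuum T (residuum T ?f ?g) ?g \<in> {0..1}"
    and B: "residuum T (residuum T ?g ?f) ?f \<in> {0..1}"
    using residuum_in_unit residuum_in_unit[OF f g] residuum_in_unit[OF g f] f g by auto
  show ?thesis
    unfolding Vee_def Wedge_def
    using tnorm_residuum_eq_one_iff[OF A B] residuum_disj_eq_one_iff[OF f g] by simp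
qed

lemma eval_fpow:
  assumes v: "range v \<subseteq> mdom M"
  shows "eval T M v (fpow \<beta> n) = tpow T (eval T M v \<beta>) n"
proof (induction \<beta> n rule: fpow.induct)
  case (1 \<beta>)
  then show ?case using residuum_eq_one_iff[of 0 0] by (simp add: Top_def)
next
  case (2 \<beta>)
  then show ?case using tnorm_one_right[OF eval_in_unit[OF v]] by simp
next
  case (3 \<beta> n)
  then show ?case by simp
qed

end

end

theorem mainTheorem6:
  fixes \<phi> \<alpha> \<beta> :: form
  shows "entails TYPE('m) {Vee \<phi> (Imp \<alpha> (fpow \<beta> n)) | n. True} (Vee \<phi> (Imp \<alpha> (SConj \<alpha> \<beta>)))"
  unfolding entails_def is_model_def
proof (intro allI impI)
  fix T and M :: "'m fstruct" and v :: "nat \<Rightarrow> 'm"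
  assume H: "cont_tnorm T \<and> is_structure M \<and>
      (\<forall>\<gamma>\<in>{Vee \<phi> (Imp \<alpha> (fpow \<beta> n)) | n. True}. \<forall>v. range v \<subseteq> mdom M \<longrightarrow> eval T M v \<gamma> = 1)"
    and v: "range v \<subseteq> mdom M"
  then have T: "cont_tnorm T" and M: "is_structure M" by auto
  let ?a = "eval T M v \<alpha>" and ?b = "eval T M v \<beta>"
  have "eval T M v \<phi> = 1 \<or> ?a \<le> tpow T ?b n" for n
  proof -
    have "eval T M v (Vee \<phi> (Imp \<alpha> (fpow \<beta> n))) = 1"
      using H v by blast
    then show ?thesis
      unfolding eval_Vee_eq_one_iff[OF T M v] eval_Imp_eq_one_iff[OF T M v] eval_fpow[OF T M v] .
  qed
  then have "eval T M v \<phi> = 1 \<or> ?a \<le> T ?a ?b"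
    using le_tnorm_if_le_tpow[OF T] eval_in_unit[OF T M v] by metis
  then show "eval T M v (Vee \<phi> (Imp \<alpha> (SConj \<alpha> \<beta>))) = 1"
    unfolding eval_Vee_eq_one_iff[OF T M v] eval_Imp_eq_one_iff[OF T M v] by simp
qed

end
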